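(* Let $P$ be a priority forest on $[n]_0$. The edge labeling of $I_P=[\hat0,P]$ given by the labels $\lambda$ (whose sequences along maximal chains are the Jordan–Hölder permutations) is an EL-labeling.
   Context: $[n]_0=\{0,\dots,n\}$. A priority forest on $[n]_0$ is a rooted forest with vertex set $[n]_0$ whose component trees $T_0,T_1,\dots$ are increasing (each non-root vertex has a larger label than its parent) and satisfy: for $j<k$ every label of $T_j$ is smaller than every label of $T_k$. $\Pi(n)$ is the poset of priority forests on $[n]_0$ ordered by inclusion of edge sets, with an extra top element; $\hat0$ is the edgeless forest. For priority forests $Q\lessdot Q'$ (i.e. $Q'$ is obtained from $Q$ by adding one edge), the label $\lambda(Q,Q')$ is the larger endpoint of the unique edge in $E(Q')\setminus E(Q)$. For a maximal chain $x=s_0\lessdot s_1\lessdot\cdots\lessdot s_k=y$ of an interval $[x,y]$, its label sequence is $(\lambda(s_0,s_1),\dots,\lambda(s_{k-1},s_k))$; the chain is increasing if this sequence is weakly increasing. An edge labeling of a poset is an EL-labeling if every interval $[x,y]$ has exactly one increasing maximal chain, and this chain's label sequence is lexicographically smaller than that of every other maximal chain of $[x,y]$. *)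

theory Defs
  imports Main
begin

text \<open>A forest on [n]_0 = {0..n} is represented by its set of directed edges (parent, child).  Rooted forest: every vertex has at most one parent
  (acyclicity is automatic since parents are smaller).\<close>

definition comp_of :: "nat \<Rightarrow> (nat \<times> nat) set \<Rightarrow> nat \<Rightarrow> nat set" where
  "comp_of n F x = {y. y \<le> n \<and> (x, y) \<in> (F \<union> F\<inverse>)\<^sup>*}"

definition priority_forest :: "nat \<Rightarrow> (nat \<times> nat) set \<Rightarrow> bool" where
  "priority_forest n F \<longleftrightarrow>
     F \<subseteq> {(a, b). a < b \<and> b \<le> n} \<and>
     (\<forall>a a' b. (a, b) \<in> F \<longrightarrow> (a', b) \<in> F \<longrightarrow> a = a') \<and>
     (\<forall>x\<le>n. \<forall>y\<le>n. comp_of n F x \<noteq> comp_of n F y \<longrightarrow>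
        (\<forall>u\<in>comp_of n F x. \<forall>v\<in>comp_of n F y. u < v) \<or>
        (\<forall>u\<in>comp_of n F x. \<forall>v\<in>comp_of n F y. v < u))"

definition lower_interval :: "nat \<Rightarrow> (nat \<times> nat) set \<Rightarrow> (nat \<times> nat) set set" where
  "lower_interval n P = {Q. priority_forest n Q \<and> Q \<subseteq> P}"

definition covers_in :: "(nat \<times> nat) set set \<Rightarrow> (nat \<times> nat) set \<Rightarrow> (nat \<times> nat) set \<Rightarrow> bool" where
  "covers_in S Q Q' \<longleftrightarrow> Q \<in> S \<and> Q' \<in> S \<and> Q \<subseteq> Q' \<and> card (Q' - Q) = 1"

definition forest_label :: "(nat \<times> nat) set \<Rightarrow> (nat \<times> nat) set \<Rightarrow> nat" where
  "forest_label Q Q' = snd (THE e. e \<in> Q' - Q)"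

definition max_chain :: "('a \<Rightarrow> 'a \<Rightarrow> bool) \<Rightarrow> 'a \<Rightarrow> 'a \<Rightarrow> 'a list \<Rightarrow> bool" where
  "max_chain cov x y cs \<longleftrightarrow> cs \<noteq> [] \<and> hd cs = x \<and> last cs = y \<and>
     (\<forall>i. Suc i < length cs \<longrightarrow> cov (cs ! i) (cs ! Suc i))"

definition label_seq :: "('a \<Rightarrow> 'a \<Rightarrow> 'l) \<Rightarrow> 'a list \<Rightarrow> 'l list" where
  "label_seq lab cs = map (\<lambda>i. lab (cs ! i) (cs ! Suc i)) [0..<length cs - 1]"

definition EL_labeling :: "'a set \<Rightarrow> ('a \<Rightarrow> 'a \<Rightarrow> bool) \<Rightarrow> ('a \<Rightarrow> 'a \<Rightarrow> bool)
    \<Rightarrow> ('a \<Rightarrow> 'a \<Rightarrow> 'l::linorder) \<Rightarrow> bool" where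
  "EL_labeling S le cov lab \<longleftrightarrow>
     (\<forall>x\<in>S. \<forall>y\<in>S. le x y \<longrightarrow>
        (\<exists>!cs. max_chain cov x y cs \<and> sorted (label_seq lab cs)) \<and>
        (\<forall>cs cs'. max_chain cov x y cs \<and> sorted (label_seq lab cs) \<and>
                  max_chain cov x y cs' \<and> cs' \<noteq> cs \<longrightarrow>
                  (label_seq lab cs, label_seq lab cs') \<in> lexord {(a, b). a < b}))"

end

theory Submission
  imports Defs
begin

(* The trees of a priority forest occupy intervals of labels, and adding to x the edge of y - x
   with the smallest child v preserves this: every w strictly between the endpoints p < v of that
   edge is already connected to p, since otherwise the root of the tree of w would receive its
   parent in y through a new edge whose child is smaller than v.  Iterating yields an increasing
   maximal chain from x to y.  As every vertex has at most one parent, a maximal chain is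
   determined by its label sequence, which lists the children of the edges of y - x without
   repetition; hence the sorted chain is unique and lexicographically first. *)

abbreviation conn :: "nat rel \<Rightarrow> nat rel" where
  "conn F \<equiv> (F \<union> F\<inverse>)\<^sup>*"

lemma conn_sym: "(a, b) \<in> conn F \<Longrightarrow> (b, a) \<in> conn F"
  by (metis converse_Un converse_converse rtrancl_converseI sup_commute)

lemma conn_insert:
  "(a, b) \<in> conn (insert (p, v) F) \<longleftrightarrow>
     (a, b) \<in> conn F \<or> (a, p) \<in> conn F \<and> (v, b) \<in> conn F \<or> (a, v) \<in> conn F \<and> (p, b) \<in> conn F"
proof -
  have "insert (p, v) F \<union> (insert (p, v) F)\<inverse> = insert (p, v) (insert (v, p) (F \<union> F\<inverse>))"
    by blast
  then show ?thesis
    by (simp add: rtrancl_insert) (meson conn_sym rtrancl_trans)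
qed

definition convex_components :: "(nat \<times> nat) set \<Rightarrow> bool" where
  "convex_components F \<longleftrightarrow> (\<forall>a w b. a \<le> w \<longrightarrow> w \<le> b \<longrightarrow> (a, b) \<in> conn F \<longrightarrow> (a, w) \<in> conn F)"

lemma convex_componentsD:
  "convex_components F \<Longrightarrow> a \<le> w \<Longrightarrow> w \<le> b \<Longrightarrow> (a, b) \<in> conn F \<Longrightarrow> (a, w) \<in> conn F"
  unfolding convex_components_def by blast

lemma conn_bounded:
  assumes "F \<subseteq> {(a, b). a < b \<and> b \<le> n}" and "(a, b) \<in> conn F" and "a \<noteq> b"
  shows "a \<le> n" "b \<le> n"
proof -
  have "a = b \<or> a \<le> n \<and> b \<le> n"
    using assms(2) by (induction rule: rtrancl_induct) (use assms(1) in auto)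
  then show "a \<le> n" "b \<le> n" using assms(3) by auto
qed

lemma conn_from_root:
  assumes "inj_on snd F" and "\<And>q. (q, r) \<notin> F" and "(r, t) \<in> conn F"
  shows "(r, t) \<in> F\<^sup>*"
  using assms(3)
proof (induction rule: rtrancl_induct)
  case (step b c)
  show ?case
  proof (cases "(b, c) \<in> F")
    case False
    with step.hyps(2) have cb: "(c, b) \<in> F" by blast
    have "r \<noteq> b" using cb assms(2) by blast
    with step.IH obtain d where rd: "(r, d) \<in> F\<^sup>*" and db: "(d, b) \<in> F"
      by (meson rtrancl_eq_or_trancl tranclD2)
    have "(d, b) = (c, b)" using inj_onD[OF assms(1) _ db cb] by simp
    with rd show ?thesis by simp
  qed (use step.IH in auto)
qed simp

lemma rtrancl_increasing_le:
  fixes F :: "'a :: order rel"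
  assumes "F \<subseteq> {(a, b). a < b}" and "(a, b) \<in> F\<^sup>*"
  shows "a \<le> b"
  using assms(2)
proof (induction rule: rtrancl_induct)
  case (step b c)
  with assms(1) show ?case by (blast intro: order.trans less_imp_le)
qed simp

lemma root_le_conn:
  assumes "F \<subseteq> {(a, b). a < b}" and "inj_on snd F" and "\<And>q. (q, r) \<notin> F" and "(r, t) \<in> conn F"
  shows "r \<le> t"
  using rtrancl_increasing_le[OF assms(1) conn_from_root[OF assms(2-4)]] .

lemma inj_on_snd_iff: "inj_on snd F \<longleftrightarrow> (\<forall>a a' b. (a, b) \<in> F \<longrightarrow> (a', b) \<in> F \<longrightarrow> a = a')"
  unfolding inj_on_def by (auto, metis prod.inject snd_conv)

lemma comp_of_eq_if_conn:
  assumes "(x, y) \<in> conn F"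
  shows "comp_of n F x = comp_of n F y"
  using rtrancl_trans[OF assms] rtrancl_trans[OF conn_sym[OF assms]] unfolding comp_of_def by blast

lemma priority_forest_increasing: "priority_forest n F \<Longrightarrow> F \<subseteq> {(a, b). a < b \<and> b \<le> n}"
  unfolding priority_forest_def by blast

lemma priority_forest_inj_on_snd: "priority_forest n F \<Longrightarrow> inj_on snd F"
  unfolding priority_forest_def inj_on_snd_iff by blast

lemma priority_forest_convex:
  assumes "priority_forest n F"
  shows "convex_components F"
  unfolding convex_components_def
proof (intro allI impI)
  fix a w b assume aw: "a \<le> w" and wb: "w \<le> b" and ab: "(a, b) \<in> conn F"
  show "(a, w) \<in> conn F"
  proof (rule ccontr)
    assume naw: "(a, w) \<notin> conn F"
    then have "a \<noteq> b" using ab aw wb by (metis le_antisym rtrancl.rtrancl_refl)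
    then have an: "a \<le> n" and bn: "b \<le> n"
      using conn_bounded[OF priority_forest_increasing[OF assms] ab] by auto
    then have wn: "w \<le> n" using wb by simp
    have "a \<in> comp_of n F a" "b \<in> comp_of n F a" "w \<in> comp_of n F w" "w \<notin> comp_of n F a"
      using an bn wn ab naw unfolding comp_of_def by auto
    moreover from this assms an wn have
      "(\<forall>u\<in>comp_of n F a. \<forall>v\<in>comp_of n F w. u < v) \<or> (\<forall>u\<in>comp_of n F a. \<forall>v\<in>comp_of n F w. v < u)"
      unfolding priority_forest_def by blast
    ultimately show False using aw wb by (metis leD)
  qed
qed

lemma priority_forestI:
  assumes inc: "F \<subseteq> {(a, b). a < b \<and> b \<le> n}" and inj: "inj_on snd F"
    and cv: "convex_components F"
  shows "priority_forest n F"
proof -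
  have "(\<forall>u\<in>comp_of n F x. \<forall>v\<in>comp_of n F y. u < v) \<or> (\<forall>u\<in>comp_of n F x. \<forall>v\<in>comp_of n F y. v < u)"
    if "comp_of n F x \<noteq> comp_of n F y" for x y
  proof (rule ccontr)
    have nxy: "(x, y) \<notin> conn F" using that comp_of_eq_if_conn by blast
    assume "\<not> ?thesis"
    then obtain u1 v1 u2 v2 where u: "(x, u1) \<in> conn F" "(x, u2) \<in> conn F"
      and v: "(y, v1) \<in> conn F" "(y, v2) \<in> conn F" and le: "v1 \<le> u1" "u2 \<le> v2"
      unfolding comp_of_def by auto
    have uu: "(u2, u1) \<in> conn F" using rtrancl_trans[OF conn_sym[OF u(2)] u(1)] .
    have vv: "(v1, v2) \<in> conn F" using rtrancl_trans[OF conn_sym[OF v(1)] v(2)] .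
    have "(x, y) \<in> conn F"
    proof (cases "u1 \<le> v2")
      case True
      then have "(v1, u1) \<in> conn F" using convex_componentsD[OF cv le(1) _ vv] by simp
      then show ?thesis using rtrancl_trans[OF rtrancl_trans[OF u(1) conn_sym] conn_sym[OF v(1)]] by blast
    next
      case False
      then have "(u2, v2) \<in> conn F" using convex_componentsD[OF cv le(2) _ uu] by simp
      then show ?thesis using rtrancl_trans[OF rtrancl_trans[OF u(2)] conn_sym[OF v(2)]] by blast
    qed
    with nxy show False ..
  qed
  then show ?thesis
    using inc inj unfolding priority_forest_def inj_on_snd_iff by (intro conjI) blast+
qed

lemma priority_forest_finite:
  assumes "priority_forest n F"
  shows "finite F"
proof (rule finite_subset)
  show "F \<subseteq> {..n} \<times> {..n}" using priority_forest_increasing[OF assms] by auto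
qed simp

lemma conn_min_new_edge:
  assumes px: "priority_forest n x" and py: "priority_forest n y" and "x \<subseteq> y"
    and pv: "(p, v) \<in> y" and min: "\<And>e. e \<in> y - x \<Longrightarrow> v \<le> snd e"
    and "p < w" and "w < v"
  shows "(p, w) \<in> conn x"
proof -
  \<comment> \<open>the root of the tree of \<open>w\<close> in \<open>x\<close>\<close>
  define r where "r = (LEAST t. (t, w) \<in> conn x)"
  have rw: "(r, w) \<in> conn x" unfolding r_def by (rule LeastI[of _ w]) simp
  have "r \<le> w" unfolding r_def by (rule Least_le) simp
  show ?thesis
  proof (cases "r \<le> p")
    case True
    with \<open>p < w\<close> have "(r, p) \<in> conn x"
      using convex_componentsD[OF priority_forest_convex[OF px] _ _ rw] by simp
    with rw show ?thesis by (meson conn_sym rtrancl_trans)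
  next
    case False
    have "(p, v) \<in> conn y" using pv by blast
    with False \<open>r \<le> w\<close> \<open>w < v\<close> have "(p, r) \<in> conn y"
      using convex_componentsD[OF priority_forest_convex[OF py], of p r v] by simp
    have "\<exists>q. (q, r) \<in> y"
    proof (rule ccontr)
      assume "\<nexists>q. (q, r) \<in> y"
      then have "r \<le> p"
        using root_le_conn[OF _ priority_forest_inj_on_snd[OF py] _ conn_sym[OF \<open>(p, r) \<in> conn y\<close>]]
          priority_forest_increasing[OF py] by blast
      with False show False by simp
    qed
    then obtain q where qr: "(q, r) \<in> y" ..
    have "(q, r) \<notin> x"
    proof
      assume "(q, r) \<in> x"
      then have "q < r" "(q, w) \<in> conn x"
        using priority_forest_increasing[OF px] rw by (auto intro: converse_rtrancl_into_rtrancl)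
      then show False unfolding r_def using not_less_Least by blast
    qed
    with qr min have "v \<le> r" by fastforce
    with \<open>r \<le> w\<close> \<open>w < v\<close> show ?thesis by simp
  qed
qed

lemma root_tree_above:
  assumes px: "priority_forest n x" and root: "\<And>q. (q, v) \<notin> x" and "p < v"
    and va: "(v, a) \<in> conn x" and pb: "(p, b) \<in> conn x"
  shows "b < a"
proof (rule ccontr)
  have inc: "x \<subseteq> {(a, b). a < b}" using priority_forest_increasing[OF px] by blast
  note root_le = root_le_conn[OF inc priority_forest_inj_on_snd[OF px] root]
  assume "\<not> b < a"
  with root_le[OF va] \<open>p < v\<close> have "(p, v) \<in> conn x"
    using convex_componentsD[OF priority_forest_convex[OF px] _ _ pb] by simp
  with root_le[OF conn_sym] \<open>p < v\<close> show False by fastforce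
qed

lemma convex_components_insert_min_edge:
  assumes px: "priority_forest n x" and py: "priority_forest n y" and xy: "x \<subseteq> y"
    and pv: "(p, v) \<in> y - x" and min: "\<And>e. e \<in> y - x \<Longrightarrow> v \<le> snd e"
  shows "convex_components (insert (p, v) x)"
  unfolding convex_components_def
proof (intro allI impI)
  fix a w b
  assume "a \<le> w" "w \<le> b" "(a, b) \<in> conn (insert (p, v) x)"
  have cvx: "convex_components x" using priority_forest_convex[OF px] .
  have "p < v" using pv priority_forest_increasing[OF py] by auto
  have v_root: "(q, v) \<notin> x" for q
    using pv xy inj_onD[OF priority_forest_inj_on_snd[OF py], of "(q, v)" "(p, v)"] by auto
  consider (old) "(a, b) \<in> conn x"
    | (forward) "(a, p) \<in> conn x" "(v, b) \<in> conn x"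
    | (backward) "(a, v) \<in> conn x" "(p, b) \<in> conn x"
    using \<open>(a, b) \<in> conn (insert (p, v) x)\<close> unfolding conn_insert by blast
  then show "(a, w) \<in> conn (insert (p, v) x)"
  proof cases
    case old
    then show ?thesis
      using convex_componentsD[OF cvx \<open>a \<le> w\<close> \<open>w \<le> b\<close>] conn_insert by blast
  next
    case forward
    consider "w \<le> p" | "p < w" "w < v" | "v \<le> w" by linarith
    then show ?thesis
    proof cases
      case 1
      then show ?thesis
        using convex_componentsD[OF cvx \<open>a \<le> w\<close> _ forward(1)] conn_insert by blast
    next
      case 2
      then have "(p, w) \<in> conn x"
        using conn_min_new_edge[OF px py xy _ min] pv by blast
      with forward(1) have "(a, w) \<in> conn x" by (rule rtrancl_trans)
      then show ?thesis using conn_insert by blast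
    next
      case 3
      then have "(v, w) \<in> conn x"
        using convex_componentsD[OF cvx _ \<open>w \<le> b\<close> forward(2)] by blast
      with forward(1) show ?thesis using conn_insert by blast
    qed
  next
    case backward
    then have "b < a" using root_tree_above[OF px v_root \<open>p < v\<close> conn_sym] by blast
    with \<open>a \<le> w\<close> \<open>w \<le> b\<close> show ?thesis by simp
  qed
qed

lemma priority_forest_insert_min_edge:
  assumes px: "priority_forest n x" and py: "priority_forest n y" and xy: "x \<subseteq> y"
    and pv: "(p, v) \<in> y - x" and min: "\<And>e. e \<in> y - x \<Longrightarrow> v \<le> snd e"
  shows "priority_forest n (insert (p, v) x)"
proof (rule priority_forestI)
  show "insert (p, v) x \<subseteq> {(a, b). a < b \<and> b \<le> n}"
    using pv priority_forest_increasing[OF px] priority_forest_increasing[OF py] by blast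
  show "inj_on snd (insert (p, v) x)"
    by (rule inj_on_subset[OF priority_forest_inj_on_snd[OF py]]) (use pv xy in blast)
  show "convex_components (insert (p, v) x)"
    using convex_components_insert_min_edge[OF assms] .
qed

lemma max_chain_Nil: "\<not> max_chain cov x y []"
  by (simp add: max_chain_def)

lemma max_chain_singleton: "max_chain cov x y [a] \<longleftrightarrow> a = x \<and> a = y"
  by (auto simp: max_chain_def)

lemma max_chain_Cons_Cons:
  "max_chain cov x y (a # b # cs) \<longleftrightarrow> a = x \<and> cov a b \<and> max_chain cov b y (b # cs)"
  by (auto simp: max_chain_def All_less_Suc2)

lemma length_label_seq: "length (label_seq lab cs) = length cs - 1"
  by (simp add: label_seq_def)

lemma label_seq_Cons_Cons: "label_seq lab (a # b # cs) = lab a b # label_seq lab (b # cs)"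
  by (simp add: label_seq_def map_upt_Suc del: upt_Suc)

lemma covers_inE:
  assumes "covers_in S Q Q'"
  obtains e where "e \<notin> Q" and "Q' = insert e Q"
proof -
  from assms have "Q \<subseteq> Q'" and "card (Q' - Q) = 1"
    unfolding covers_in_def by auto
  then obtain e where "Q' - Q = {e}" by (meson card_1_singletonE)
  with \<open>Q \<subseteq> Q'\<close> show ?thesis using that by blast
qed

lemma covers_in_insert: "Q \<in> S \<Longrightarrow> insert e Q \<in> S \<Longrightarrow> e \<notin> Q \<Longrightarrow> covers_in S Q (insert e Q)"
  by (simp add: covers_in_def insert_Diff_if subset_insertI)

lemma forest_label_insert: "e \<notin> Q \<Longrightarrow> forest_label Q (insert e Q) = snd e"
  by (simp add: forest_label_def insert_Diff_if)

lemma max_chain_covers_in_labels: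
  assumes "max_chain (covers_in S) x y cs" and "inj_on snd y"
  shows "x \<subseteq> y \<and> distinct (label_seq forest_label cs) \<and> set (label_seq forest_label cs) = snd ` (y - x)"
  using assms(1)
proof (induction cs arbitrary: x)
  case (Cons a cs)
  show ?case
  proof (cases cs)
    case Nil
    with Cons.prems show ?thesis by (auto simp: max_chain_singleton label_seq_def)
  next
    case (Cons b cs')
    with Cons.prems have "a = x" and cov: "covers_in S x b" and mc: "max_chain (covers_in S) b y cs"
      by (auto simp: max_chain_Cons_Cons)
    from cov obtain e where e: "e \<notin> x" "b = insert e x" by (rule covers_inE)
    from Cons.IH[OF mc] have IH: "b \<subseteq> y" "distinct (label_seq forest_label cs)"
      "set (label_seq forest_label cs) = snd ` (y - b)" by blast+
    have "snd e \<notin> snd ` (y - b)"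
      using IH(1) e inj_onD[OF assms(2)] by blast
    moreover have "y - x = insert e (y - b)" using IH(1) e by blast
    ultimately show ?thesis
      using IH e \<open>a = x\<close> Cons by (simp add: label_seq_Cons_Cons forest_label_insert)
  qed
qed (simp add: max_chain_Nil)

lemma max_chain_covers_in_label_seq_inj:
  assumes "max_chain (covers_in S) x y cs" and "max_chain (covers_in S) x y cs'" and "inj_on snd y"
    and "label_seq forest_label cs = label_seq forest_label cs'"
  shows "cs = cs'"
  using assms(1,2,4)
proof (induction cs arbitrary: x cs')
  case (Cons a cs)
  show ?case
  proof (cases cs)
    case Nil
    then have "length cs' - 1 = 0"
      using arg_cong[OF Cons.prems(3), of length] by (simp add: length_label_seq)
    moreover have "cs' \<noteq> []" "hd cs' = x" "a = x"
      using Cons.prems(1,2) by (auto simp: max_chain_def)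
    ultimately show ?thesis using Nil by (cases cs') auto
  next
    case (Cons b r)
    from Cons.prems(1) \<open>cs = b # r\<close> have "a = x" and cov: "covers_in S x b"
      and mc: "max_chain (covers_in S) b y cs"
      by (auto simp: max_chain_Cons_Cons)
    have "label_seq forest_label cs' \<noteq> []"
      using Cons.prems(3) \<open>cs = b # r\<close> by (metis label_seq_Cons_Cons list.distinct(1))
    with Cons.prems(2) obtain b' r' where cs': "cs' = x # b' # r'"
      by (cases cs' rule: remdups_adj.cases) (auto simp: max_chain_def label_seq_def)
    with Cons.prems(2) have cov': "covers_in S x b'" and mc': "max_chain (covers_in S) b' y (b' # r')"
      by (simp_all add: max_chain_Cons_Cons)
    from cov obtain e where e: "e \<notin> x" "b = insert e x" by (rule covers_inE)
    from cov' obtain e' where e': "e' \<notin> x" "b' = insert e' x" by (rule covers_inE)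
    have "e \<in> y" "e' \<in> y"
      using max_chain_covers_in_labels[OF mc assms(3)] max_chain_covers_in_labels[OF mc' assms(3)] e e'
      by blast+
    moreover have "snd e = snd e'"
      using Cons.prems(3) cs' \<open>cs = b # r\<close> \<open>a = x\<close> e e' by (simp add: label_seq_Cons_Cons forest_label_insert)
    ultimately have "b = b'" using e e' inj_onD[OF assms(3)] by blast
    with Cons.IH[OF mc] mc' Cons.prems(3) cs' \<open>cs = b # r\<close> \<open>a = x\<close> show ?thesis
      by (simp add: label_seq_Cons_Cons)
  qed
qed (simp add: max_chain_Nil)

lemma sorted_distinct_lexord_less:
  fixes xs ys :: "'a::linorder list"
  assumes "sorted xs" and "distinct xs" and "distinct ys" and "set xs = set ys" and "xs \<noteq> ys"
  shows "(xs, ys) \<in> lexord {(a, b). a < b}"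
  using assms
proof (induction xs arbitrary: ys)
  case (Cons a xs)
  then obtain b ys' where ys: "ys = b # ys'" by (cases ys) auto
  show ?case
  proof (cases "a = b")
    case True
    with Cons.prems ys have "set xs = set ys'" by auto
    with Cons ys True show ?thesis by simp
  next
    case False
    moreover have "a \<le> b" using Cons.prems(1,4) ys by auto
    ultimately show ?thesis using ys by simp
  qed
qed simp

lemma max_chain_Cons_min_edge:
  assumes mc: "max_chain (covers_in S) (insert e x) y cs" and srt: "sorted (label_seq forest_label cs)"
    and "x \<in> S" "insert e x \<in> S" "e \<notin> x" and inj: "inj_on snd y"
    and min: "\<And>e'. e' \<in> y - x \<Longrightarrow> snd e \<le> snd e'"
  shows "max_chain (covers_in S) x y (x # cs) \<and> sorted (label_seq forest_label (x # cs))"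
proof -
  obtain r where cs: "cs = insert e x # r" using mc by (cases cs) (auto simp: max_chain_def)
  have "covers_in S x (insert e x)" by (rule covers_in_insert) fact+
  with mc cs have "max_chain (covers_in S) x y (x # cs)" by (simp add: max_chain_Cons_Cons)
  moreover have "set (label_seq forest_label cs) = snd ` (y - insert e x)"
    using max_chain_covers_in_labels[OF mc inj] by blast
  then have "\<forall>l \<in> set (label_seq forest_label cs). snd e \<le> l" using min by auto
  with srt cs \<open>e \<notin> x\<close> have "sorted (label_seq forest_label (x # cs))"
    by (simp add: label_seq_Cons_Cons forest_label_insert)
  ultimately show ?thesis ..
qed

lemma sorted_max_chain_exists:
  assumes "x \<in> lower_interval n P" and "y \<in> lower_interval n P" and "x \<subseteq> y"
  shows "\<exists>cs. max_chain (covers_in (lower_interval n P)) x y cs \<and> sorted (label_seq forest_label cs)"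
  using assms
proof (induction "card (y - x)" arbitrary: x)
  case 0
  have "finite y" using \<open>y \<in> lower_interval n P\<close> priority_forest_finite
    unfolding lower_interval_def by blast
  with 0 have "x = y" by auto
  then have "max_chain (covers_in (lower_interval n P)) x y [x]"
    by (simp add: max_chain_singleton)
  then show ?case by (auto simp: label_seq_def)
next
  case (Suc k)
  have px: "priority_forest n x" and py: "priority_forest n y" and "y \<subseteq> P"
    using Suc.prems unfolding lower_interval_def by auto
  have fin: "finite (y - x)" using priority_forest_finite[OF py] by blast
  have "y - x \<noteq> {}" using Suc.hyps(2) by force
  then obtain e where e: "e \<in> y - x" and min: "\<And>e'. e' \<in> y - x \<Longrightarrow> snd e \<le> snd e'"
    using ex_has_least_nat[of "\<lambda>e. e \<in> y - x" _ snd] by blast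
  then obtain p v where pv: "(p, v) \<in> y - x" "e = (p, v)" by (cases e) auto
  have "priority_forest n (insert e x)"
    using priority_forest_insert_min_edge[OF px py \<open>x \<subseteq> y\<close>] pv min by simp
  then have x': "insert e x \<in> lower_interval n P" "insert e x \<subseteq> y"
    using e \<open>x \<subseteq> y\<close> \<open>y \<subseteq> P\<close> unfolding lower_interval_def by auto
  have "y - insert e x = (y - x) - {e}" by blast
  then have "card (y - insert e x) = k" using Suc.hyps(2) fin e by (simp add: card_Diff_singleton)
  with Suc.hyps(1) x' Suc.prems(2) obtain cs where
    "max_chain (covers_in (lower_interval n P)) (insert e x) y cs" "sorted (label_seq forest_label cs)"
    by blast
  with Suc.prems(1) x'(1) e min show ?case
    using max_chain_Cons_min_edge[OF _ _ _ _ _ priority_forest_inj_on_snd[OF py]] by blast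
qed

lemma EL_labelingI:
  assumes "\<And>x y. x \<in> S \<Longrightarrow> y \<in> S \<Longrightarrow> le x y \<Longrightarrow>
    \<exists>cs. max_chain cov x y cs \<and> sorted (label_seq lab cs) \<and>
      (\<forall>cs'. max_chain cov x y cs' \<longrightarrow> cs' \<noteq> cs \<longrightarrow>
        \<not> sorted (label_seq lab cs') \<and> (label_seq lab cs, label_seq lab cs') \<in> lexord {(a, b). a < b})"
  shows "EL_labeling S le cov lab"
  unfolding EL_labeling_def
proof (intro ballI impI)
  fix x y assume "x \<in> S" "y \<in> S" "le x y"
  from assms[OF this] obtain cs where "max_chain cov x y cs" "sorted (label_seq lab cs)"
    and "\<forall>cs'. max_chain cov x y cs' \<longrightarrow> cs' \<noteq> cs \<longrightarrow>
        \<not> sorted (label_seq lab cs') \<and> (label_seq lab cs, label_seq lab cs') \<in> lexord {(a, b). a < b}"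
    by blast
  then show "(\<exists>!cs. max_chain cov x y cs \<and> sorted (label_seq lab cs)) \<and>
    (\<forall>cs cs'. max_chain cov x y cs \<and> sorted (label_seq lab cs) \<and> max_chain cov x y cs' \<and> cs' \<noteq> cs \<longrightarrow>
      (label_seq lab cs, label_seq lab cs') \<in> lexord {(a, b). a < b})"
    by blast
qed

theorem lemma5p7:
  fixes n :: nat and P :: "(nat \<times> nat) set"
  assumes "priority_forest n P"
  shows "EL_labeling (lower_interval n P) (\<subseteq>) (covers_in (lower_interval n P)) forest_label"
proof (rule EL_labelingI)
  let ?cov = "covers_in (lower_interval n P)" and ?L = "label_seq forest_label"
  fix x y assume "x \<in> lower_interval n P" "y \<in> lower_interval n P" "x \<subseteq> y"
  then obtain cs where mc: "max_chain ?cov x y cs" and srt: "sorted (?L cs)"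
    using sorted_max_chain_exists by blast
  have inj: "inj_on snd y"
    using \<open>y \<in> lower_interval n P\<close> priority_forest_inj_on_snd unfolding lower_interval_def by blast
  have labels: "distinct (?L c) \<and> set (?L c) = snd ` (y - x)" if "max_chain ?cov x y c" for c
    using max_chain_covers_in_labels[OF that inj] by blast
  have "\<not> sorted (?L c) \<and> (?L cs, ?L c) \<in> lexord {(a, b). a < b}" if "max_chain ?cov x y c" "c \<noteq> cs" for c
  proof -
    have "?L c \<noteq> ?L cs" using max_chain_covers_in_label_seq_inj[OF that(1) mc inj] that(2) by blast
    then show ?thesis
      using sorted_distinct_set_unique[OF _ _ srt] sorted_distinct_lexord_less[OF srt] labels[OF mc] labels[OF that(1)]
      by metis
  qed
  with mc srt show "\<exists>cs. max_chain ?cov x y cs \<and> sorted (?L cs) \<and>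
    (\<forall>c. max_chain ?cov x y c \<longrightarrow> c \<noteq> cs \<longrightarrow> \<not> sorted (?L c) \<and> (?L cs, ?L c) \<in> lexord {(a, b). a < b})"
    by blast
qed

end
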